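(* Let $R$ be a commutative ring and $S$ a subset of $R$. Consider: (a) $S$ is coprincipal; (b) there are rings $R_1,R_2$ with $R=R_1\times R_2$ such that $S\cap(R_1)^\times\neq\emptyset$ and $s\cdot(1,0)\in(R_1)^\times$ for all $s\in S$. Then (b) implies (a). If moreover $S$ is multiplicatively closed, then (a) implies (b).
   Context: $S$ is coprincipal if $S\ne\emptyset$ and there exists $s\in S$ with $s\in\bigcap_{r\in S}Rr$. $(R_1)^\times$ denotes the units of $R_1$, and $R_1$ is identified with the subset $R_1\times\{0\}$ of $R$, so $(R_1)^\times=\{(u,0):u \text{ a unit of } R_1\}$. *)

theory Defs
  imports "HOL-Algebra.Algebra"
begin

definition coprincipal :: "('a, 'm) ring_scheme \<Rightarrow> 'a set \<Rightarrow> bool" where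
  "coprincipal R S \<longleftrightarrow> S \<noteq> {} \<and>
     (\<exists>s\<in>S. \<forall>r\<in>S. \<exists>x\<in>carrier R. s = x \<otimes>\<^bsub>R\<^esub> r)"

definition mult_closed :: "('a, 'm) ring_scheme \<Rightarrow> 'a set \<Rightarrow> bool" where
  "mult_closed R S \<longleftrightarrow> (\<forall>a\<in>S. \<forall>b\<in>S. a \<otimes>\<^bsub>R\<^esub> b \<in> S)"

text \<open>Condition (b): R is (isomorphic to) a product R1 x R2 via phi, with R1 identified with
  R1 x {0}; S meets the units of R1, and s(1,0) is a unit of R1 for all s in S.\<close>
definition split_cond :: "('a, 'm) ring_scheme \<Rightarrow> 'a set \<Rightarrow> bool" where
  "split_cond R S \<longleftrightarrow> (\<exists>(R1 :: 'a ring) (R2 :: 'a ring) \<phi>.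
      ring R1 \<and> ring R2 \<and> \<phi> \<in> ring_iso R (RDirProd R1 R2) \<and>
      (\<exists>s\<in>S. \<phi> s \<in> Units R1 \<times> {\<zero>\<^bsub>R2\<^esub>}) \<and>
      (\<forall>s\<in>S. \<phi> s \<otimes>\<^bsub>RDirProd R1 R2\<^esub> (\<one>\<^bsub>R1\<^esub>, \<zero>\<^bsub>R2\<^esub>) \<in> Units R1 \<times> {\<zero>\<^bsub>R2\<^esub>}))"

end

theory Submission
  imports Defs
begin

text \<open>If \<open>S\<close> is multiplicatively closed with a common multiple \<open>s = x r\<close> of all \<open>r \<in> S\<close>,
  then \<open>s = x s\<^sup>2\<close>, so \<open>e = x s\<close> is an idempotent with \<open>e s = s\<close> lying in every ideal \<open>R r\<close>.
  The Peirce decomposition \<open>R \<cong> eR \<times> (1 - e)R\<close> then makes every \<open>r \<in> S\<close> invertible in the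
  first factor and kills \<open>s\<close> in the second.  Conversely, if \<open>s \<mapsto> (u, 0)\<close> with \<open>u\<close> a unit and
  every \<open>r \<mapsto> (v, y)\<close> with \<open>v\<close> a unit, then \<open>(u, 0) = (u v\<inverse>, 0) (v, y)\<close>, so \<open>s \<in> R r\<close>.\<close>

lemma RDirProd_mult: "(a, b) \<otimes>\<^bsub>RDirProd R S\<^esub> (c, d) = (a \<otimes>\<^bsub>R\<^esub> c, b \<otimes>\<^bsub>S\<^esub> d)"
  by (simp add: RDirProd_def DirProd_def monoid.defs)

lemma RDirProd_unit_multiple:
  assumes "ring R1" "ring R2" "u \<in> Units R1" "v \<in> Units R1" "y \<in> carrier R2"
  shows "\<exists>w\<in>carrier (RDirProd R1 R2). (u, \<zero>\<^bsub>R2\<^esub>) = w \<otimes>\<^bsub>RDirProd R1 R2\<^esub> (v, y)"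
proof -
  interpret R1: ring R1 by fact
  interpret R2: ring R2 by fact
  have "u \<otimes>\<^bsub>R1\<^esub> inv\<^bsub>R1\<^esub> v \<otimes>\<^bsub>R1\<^esub> v = u"
    using assms(3,4) by (simp add: R1.m_assoc R1.Units_closed)
  moreover have "\<zero>\<^bsub>R2\<^esub> \<otimes>\<^bsub>R2\<^esub> y = \<zero>\<^bsub>R2\<^esub>" using assms(5) by simp
  moreover have "(u \<otimes>\<^bsub>R1\<^esub> inv\<^bsub>R1\<^esub> v, \<zero>\<^bsub>R2\<^esub>) \<in> carrier (RDirProd R1 R2)"
    using assms(3,4) by (simp add: RDirProd_carrier R1.Units_closed)
  ultimately show ?thesis by (metis RDirProd_mult)
qed

lemma ring_iso_reflects_multiples:
  assumes "ring R" and iso: "\<phi> \<in> ring_iso R T" and ab: "a \<in> carrier R" "b \<in> carrier R"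
    and w: "w \<in> carrier T" "\<phi> a = w \<otimes>\<^bsub>T\<^esub> \<phi> b"
  shows "\<exists>x\<in>carrier R. a = x \<otimes>\<^bsub>R\<^esub> b"
proof -
  have hom: "\<phi> \<in> ring_hom R T" and bij: "bij_betw \<phi> (carrier R) (carrier T)"
    using iso by (auto simp: ring_iso_def)
  obtain x where x: "x \<in> carrier R" "\<phi> x = w"
    using w(1) bij_betw_imp_surj_on[OF bij] by (metis imageE)
  have "\<phi> (x \<otimes>\<^bsub>R\<^esub> b) = \<phi> a"
    using ring_hom_mult[OF hom x(1) ab(2)] x(2) w(2) by simp
  moreover have "x \<otimes>\<^bsub>R\<^esub> b \<in> carrier R"
    using x(1) ab(2) by (simp add: ring.ring_simprules(5)[OF \<open>ring R\<close>])
  ultimately have "a = x \<otimes>\<^bsub>R\<^esub> b"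
    using bij_betw_imp_inj_on[OF bij] ab(1) by (simp add: inj_on_def)
  with x(1) show ?thesis by blast
qed

lemma split_cond_imp_coprincipal:
  fixes R :: "'a ring"
  assumes "ring R" "S \<subseteq> carrier R" "split_cond R S"
  shows "coprincipal R S"
proof -
  obtain R1 R2 :: "'a ring" and \<phi> where rings: "ring R1" "ring R2"
    and iso: "\<phi> \<in> ring_iso R (RDirProd R1 R2)"
    and ex: "\<exists>s\<in>S. \<phi> s \<in> Units R1 \<times> {\<zero>\<^bsub>R2\<^esub>}"
    and all: "\<forall>s\<in>S. \<phi> s \<otimes>\<^bsub>RDirProd R1 R2\<^esub> (\<one>\<^bsub>R1\<^esub>, \<zero>\<^bsub>R2\<^esub>) \<in> Units R1 \<times> {\<zero>\<^bsub>R2\<^esub>}"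
    using assms(3) unfolding split_cond_def by (elim exE conjE) (rule that; assumption)
  interpret R1: ring R1 by (rule rings(1))
  interpret R2: ring R2 by (rule rings(2))
  obtain s u where s: "s \<in> S" "\<phi> s = (u, \<zero>\<^bsub>R2\<^esub>)" "u \<in> Units R1" using ex by blast
  have "\<exists>x\<in>carrier R. s = x \<otimes>\<^bsub>R\<^esub> r" if r: "r \<in> S" for r
  proof -
    have "\<phi> r \<in> carrier (RDirProd R1 R2)"
      using iso r assms(2) by (auto simp: ring_iso_def intro: ring_hom_closed)
    then obtain v y where vy: "\<phi> r = (v, y)" "v \<in> carrier R1" "y \<in> carrier R2"
      by (auto simp: RDirProd_carrier)
    then have "\<phi> r \<otimes>\<^bsub>RDirProd R1 R2\<^esub> (\<one>\<^bsub>R1\<^esub>, \<zero>\<^bsub>R2\<^esub>) = (v, \<zero>\<^bsub>R2\<^esub>)"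
      by (simp add: RDirProd_mult)
    then have "v \<in> Units R1" using all r by auto
    then obtain w where "w \<in> carrier (RDirProd R1 R2)" "\<phi> s = w \<otimes>\<^bsub>RDirProd R1 R2\<^esub> \<phi> r"
      using RDirProd_unit_multiple[OF rings s(3) _ vy(3)] unfolding s(2) vy(1) by blast
    then show ?thesis
      using ring_iso_reflects_multiples[OF assms(1) iso] s(1) r assms(2) by blast
  qed
  with s(1) show ?thesis unfolding coprincipal_def by blast
qed

context cring
begin

lemma idempotent_mult_weak_ring_morphism:
  assumes e: "e \<in> carrier R" "e \<otimes> e = e"
  shows "weak_ring_morphism (\<lambda>a. e \<otimes> a) (PIdl (\<one> \<ominus> e)) R"
proof (rule weak_ring_morphismI)
  show "ideal (PIdl (\<one> \<ominus> e)) R" using e by (intro cgenideal_ideal) simp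
  fix a b assume a: "a \<in> carrier R" and b: "b \<in> carrier R"
  have kill: "e \<otimes> (x \<otimes> (\<one> \<ominus> e)) = \<zero>" if "x \<in> carrier R" for x
  proof -
    have "e \<otimes> (x \<otimes> (\<one> \<ominus> e)) = x \<otimes> (e \<ominus> e \<otimes> e)" using that e(1) by algebra
    also have "e \<ominus> e \<otimes> e = \<zero>" using e by simp
    finally show ?thesis using that by simp
  qed
  have diff: "e \<otimes> (a \<ominus> b) = e \<otimes> a \<ominus> e \<otimes> b" using a b e(1) by algebra
  show "(e \<otimes> a = e \<otimes> b) = (a \<ominus> b \<in> PIdl (\<one> \<ominus> e))"
  proof
    assume "e \<otimes> a = e \<otimes> b"
    then have "e \<otimes> (a \<ominus> b) = \<zero>" using diff a b e(1) by simp
    moreover have "(a \<ominus> b) \<otimes> (\<one> \<ominus> e) = (a \<ominus> b) \<ominus> e \<otimes> (a \<ominus> b)" using a b e(1) by algebra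
    ultimately have "a \<ominus> b = (a \<ominus> b) \<otimes> (\<one> \<ominus> e)" using a b by (simp add: a_minus_def)
    then show "a \<ominus> b \<in> PIdl (\<one> \<ominus> e)" unfolding cgenideal_def using a b by blast
  next
    assume "a \<ominus> b \<in> PIdl (\<one> \<ominus> e)"
    then obtain x where "x \<in> carrier R" "a \<ominus> b = x \<otimes> (\<one> \<ominus> e)" unfolding cgenideal_def by blast
    then have "e \<otimes> a \<ominus> e \<otimes> b = \<zero>" using kill diff by simp
    then show "e \<otimes> a = e \<otimes> b" using a b e(1) by simp
  qed
qed

lemma idempotent_complement:
  assumes e: "e \<in> carrier R" "e \<otimes> e = e"
  shows "e \<otimes> (\<one> \<ominus> e) = \<zero>" and "(\<one> \<ominus> e) \<otimes> (\<one> \<ominus> e) = \<one> \<ominus> e"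
proof -
  have "e \<otimes> (\<one> \<ominus> e) = e \<ominus> e \<otimes> e" using e(1) by algebra
  then show ec: "e \<otimes> (\<one> \<ominus> e) = \<zero>" using e by simp
  have "(\<one> \<ominus> e) \<otimes> (\<one> \<ominus> e) = (\<one> \<ominus> e) \<ominus> e \<otimes> (\<one> \<ominus> e)" using e(1) by algebra
  then show "(\<one> \<ominus> e) \<otimes> (\<one> \<ominus> e) = \<one> \<ominus> e" using ec e(1) by (simp add: a_minus_def)
qed

lemma peirce_decomposition_iso:
  assumes e: "e \<in> carrier R" "e \<otimes> e = e"
  shows "(\<lambda>a. (e \<otimes> a, (\<one> \<ominus> e) \<otimes> a))
    \<in> ring_iso R (RDirProd (image_ring (\<lambda>a. e \<otimes> a) R) (image_ring (\<lambda>a. (\<one> \<ominus> e) \<otimes> a) R))"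
    (is "?\<phi> \<in> ring_iso R (RDirProd ?R1 ?R2)")
proof -
  define c where "c = \<one> \<ominus> e"
  have cc: "c \<in> carrier R" using e(1) by (simp add: c_def)
  have ec: "e \<otimes> c = \<zero>" and c_idem: "c \<otimes> c = c"
    using idempotent_complement[OF e] by (simp_all add: c_def)
  have ce: "c \<otimes> e = \<zero>" using ec cc e(1) by (simp add: m_comm)
  have "(\<lambda>a. e \<otimes> a) \<in> ring_hom R ?R1" "(\<lambda>a. c \<otimes> a) \<in> ring_hom R (image_ring (\<lambda>a. c \<otimes> a) R)"
    using weak_ring_morphism_is_hom idempotent_mult_weak_ring_morphism e cc c_idem by blast+
  then have hom: "?\<phi> \<in> ring_hom R (RDirProd ?R1 ?R2)"
    using ring_hom_trans[OF RDirProd_hom1 RDirProd_hom3] unfolding c_def by (simp add: comp_def)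
  have decomp: "a = e \<otimes> a \<oplus> c \<otimes> a" if "a \<in> carrier R" for a
    using that e(1) unfolding c_def by algebra
  have "(e \<otimes> a, c \<otimes> b) \<in> ?\<phi> ` carrier R" if "a \<in> carrier R" "b \<in> carrier R" for a b
  proof -
    have "e \<otimes> (e \<otimes> a \<oplus> c \<otimes> b) = (e \<otimes> e) \<otimes> a \<oplus> (e \<otimes> c) \<otimes> b"
      "c \<otimes> (e \<otimes> a \<oplus> c \<otimes> b) = (c \<otimes> e) \<otimes> a \<oplus> (c \<otimes> c) \<otimes> b"
      using that e(1) cc by algebra+
    then have "?\<phi> (e \<otimes> a \<oplus> c \<otimes> b) = (e \<otimes> a, c \<otimes> b)"
      using that e cc ec ce c_idem unfolding c_def[symmetric] by simp
    moreover have "e \<otimes> a \<oplus> c \<otimes> b \<in> carrier R" using that e(1) cc by simp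
    ultimately show ?thesis by (rule image_eqI[OF sym])
  qed
  then have "carrier (RDirProd ?R1 ?R2) \<subseteq> ?\<phi> ` carrier R"
    unfolding c_def[symmetric] RDirProd_carrier image_ring_carrier by blast
  then have surj: "?\<phi> ` carrier R = carrier (RDirProd ?R1 ?R2)"
    using ring_hom_closed[OF hom] by blast
  have "inj_on ?\<phi> (carrier R)"
  proof (rule inj_onI)
    fix a b assume "a \<in> carrier R" "b \<in> carrier R" "?\<phi> a = ?\<phi> b"
    then have "e \<otimes> a = e \<otimes> b" "c \<otimes> a = c \<otimes> b" unfolding c_def by simp_all
    then show "a = b" using decomp \<open>a \<in> carrier R\<close> \<open>b \<in> carrier R\<close> by metis
  qed
  with hom surj show ?thesis by (simp add: ring_iso_def bij_betw_def)
qed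

lemma idempotent_image_ring_unit:
  assumes e: "e \<in> carrier R" "e \<otimes> e = e"
    and ab: "a \<in> carrier R" "b \<in> carrier R" "e \<otimes> (a \<otimes> b) = e"
  shows "e \<otimes> a \<in> Units (image_ring (\<lambda>x. e \<otimes> x) R)"
proof -
  let ?R1 = "image_ring (\<lambda>x. e \<otimes> x) R"
  have hom: "(\<lambda>x. e \<otimes> x) \<in> ring_hom R ?R1"
    using weak_ring_morphism_is_hom[OF idempotent_mult_weak_ring_morphism[OF e]] .
  have one: "\<one>\<^bsub>?R1\<^esub> = e" using e(1) by (simp add: image_ring_one)
  have "(e \<otimes> a) \<otimes>\<^bsub>?R1\<^esub> (e \<otimes> b) = e \<otimes> (a \<otimes> b)"
    using ring_hom_mult[OF hom ab(1,2)] by (rule sym)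
  then have "(e \<otimes> a) \<otimes>\<^bsub>?R1\<^esub> (e \<otimes> b) = \<one>\<^bsub>?R1\<^esub>"
    unfolding one using ab(3) by (rule trans)
  moreover have "(e \<otimes> b) \<otimes>\<^bsub>?R1\<^esub> (e \<otimes> a) = e \<otimes> (a \<otimes> b)"
    using ring_hom_mult[OF hom ab(2,1)] m_comm[OF ab(2,1)] by simp
  then have "(e \<otimes> b) \<otimes>\<^bsub>?R1\<^esub> (e \<otimes> a) = \<one>\<^bsub>?R1\<^esub>"
    unfolding one using ab(3) by (rule trans)
  moreover have "e \<otimes> a \<in> carrier ?R1" "e \<otimes> b \<in> carrier ?R1"
    using ab by (simp_all add: image_ring_carrier)
  ultimately show ?thesis unfolding Units_def by (intro CollectI conjI bexI[of _ "e \<otimes> b"])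
qed

lemma coprincipal_mult_closed_idempotent:
  assumes S: "S \<subseteq> carrier R" and "mult_closed R S" "coprincipal R S"
  obtains s e where "s \<in> S" "e \<in> carrier R" "e \<otimes> e = e" "e \<otimes> s = s"
    and "\<And>r. r \<in> S \<Longrightarrow> \<exists>z\<in>carrier R. e = z \<otimes> r"
proof -
  obtain s where s: "s \<in> S" and common: "\<forall>r\<in>S. \<exists>x\<in>carrier R. s = x \<otimes> r"
    using assms(3) unfolding coprincipal_def by blast
  have sc: "s \<in> carrier R" using s S by blast
  have "s \<otimes> s \<in> S" using assms(2) s unfolding mult_closed_def by blast
  then obtain x where xc: "x \<in> carrier R" and sx: "s = x \<otimes> (s \<otimes> s)" using common by blast
  define e where "e = x \<otimes> s"
  have ec: "e \<in> carrier R" using xc sc by (simp add: e_def)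
  have "e \<otimes> s = x \<otimes> (s \<otimes> s)" unfolding e_def by (rule m_assoc[OF xc sc sc])
  also have "\<dots> = s" by (rule sx[symmetric])
  finally have es: "e \<otimes> s = s" .
  have "e \<otimes> e = x \<otimes> (e \<otimes> s)" using xc sc unfolding e_def by algebra
  then have ee: "e \<otimes> e = e" unfolding es by (simp add: e_def)
  have "\<exists>z\<in>carrier R. e = z \<otimes> r" if r: "r \<in> S" for r
  proof -
    obtain y where y: "y \<in> carrier R" "s = y \<otimes> r" using common r by blast
    moreover have "r \<in> carrier R" using r S by blast
    ultimately have "e = (x \<otimes> y) \<otimes> r" unfolding e_def using xc by (simp add: m_assoc)
    then show ?thesis using m_closed[OF xc y(1)] by blast
  qed
  with s ec ee es show thesis using that by blast
qed

lemma coprincipal_imp_split_cond: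
  assumes S: "S \<subseteq> carrier R" and "mult_closed R S" "coprincipal R S"
  shows "split_cond R S"
proof -
  obtain s e where s: "s \<in> S" and e: "e \<in> carrier R" "e \<otimes> e = e" and es: "e \<otimes> s = s"
    and e_mult: "\<And>r. r \<in> S \<Longrightarrow> \<exists>z\<in>carrier R. e = z \<otimes> r"
    using coprincipal_mult_closed_idempotent[OF assms] by blast
  define c where "c = \<one> \<ominus> e"
  have c: "c \<in> carrier R" "c \<otimes> c = c" "e \<otimes> c = \<zero>"
    using e idempotent_complement[OF e] by (simp_all add: c_def)
  define R1 where "R1 = image_ring (\<lambda>a. e \<otimes> a) R"
  define R2 where "R2 = image_ring (\<lambda>a. c \<otimes> a) R"
  define \<phi> where "\<phi> = (\<lambda>a. (e \<otimes> a, c \<otimes> a))"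
  have w1: "weak_ring_morphism (\<lambda>a. e \<otimes> a) (PIdl (\<one> \<ominus> e)) R"
    and w2: "weak_ring_morphism (\<lambda>a. c \<otimes> a) (PIdl (\<one> \<ominus> c)) R"
    using idempotent_mult_weak_ring_morphism e c(1,2) by blast+
  interpret R1: ring R1 unfolding R1_def using w1 by (rule image_ring_is_ring)
  interpret R2: ring R2 unfolding R2_def using w2 by (rule image_ring_is_ring)
  have iso: "\<phi> \<in> ring_iso R (RDirProd R1 R2)"
    unfolding \<phi>_def R1_def R2_def c_def using peirce_decomposition_iso[OF e] .
  have zero2: "\<zero>\<^bsub>R2\<^esub> = \<zero>"
    using c(1) by (simp add: R2_def image_ring_zero)
  \<comment> \<open>\<open>e \<in> R r\<close> makes the image of \<open>r\<close> invertible in \<open>eR\<close>\<close>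
  have unit: "e \<otimes> r \<in> Units R1" if r: "r \<in> S" for r
  proof -
    obtain z where z: "z \<in> carrier R" "e = z \<otimes> r" using e_mult r by blast
    have "r \<in> carrier R" using r S by blast
    then have "e \<otimes> (r \<otimes> z) = e \<otimes> e" using z by (simp add: m_comm)
    also have "\<dots> = e" by (rule e(2))
    finally have "e \<otimes> (r \<otimes> z) = e" .
    then show ?thesis
      unfolding R1_def using idempotent_image_ring_unit[OF e \<open>r \<in> carrier R\<close> z(1)] by blast
  qed
  have sc: "s \<in> carrier R" using s S by blast
  have "c \<otimes> s = (c \<otimes> e) \<otimes> s" unfolding m_assoc[OF c(1) e(1) sc] es ..
  also have "\<dots> = \<zero>" using c(1,3) e(1) sc by (simp add: m_comm)
  finally have "c \<otimes> s = \<zero>" .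
  then have s_split: "\<phi> s \<in> Units R1 \<times> {\<zero>\<^bsub>R2\<^esub>}"
    using unit[OF s] zero2 by (simp add: \<phi>_def)
  have r_split: "\<phi> r \<otimes>\<^bsub>RDirProd R1 R2\<^esub> (\<one>\<^bsub>R1\<^esub>, \<zero>\<^bsub>R2\<^esub>) \<in> Units R1 \<times> {\<zero>\<^bsub>R2\<^esub>}"
    if r: "r \<in> S" for r
  proof -
    have "e \<otimes> r \<in> carrier R1" "c \<otimes> r \<in> carrier R2"
      using r S by (auto simp: R1_def R2_def image_ring_carrier)
    then show ?thesis using unit[OF r] by (simp add: \<phi>_def RDirProd_mult)
  qed
  show ?thesis
    unfolding split_cond_def
  proof (rule exI[of _ R1], rule exI[of _ R2], rule exI[of _ \<phi>], intro conjI)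
    show "\<exists>s\<in>S. \<phi> s \<in> Units R1 \<times> {\<zero>\<^bsub>R2\<^esub>}" by (rule bexI[of _ s]) (fact s_split, fact s)
  qed (use R1.ring_axioms R2.ring_axioms iso r_split in auto)
qed

end

theorem lemma3p14:
  fixes R :: "'a ring" and S :: "'a set"
  assumes "cring R" and "S \<subseteq> carrier R"
  shows "(split_cond R S \<longrightarrow> coprincipal R S) \<and>
         (mult_closed R S \<longrightarrow> coprincipal R S \<longrightarrow> split_cond R S)"
proof (intro conjI impI)
  show "coprincipal R S" if "split_cond R S"
    using split_cond_imp_coprincipal[OF cring.axioms(1)[OF assms(1)] assms(2) that] .
  show "split_cond R S" if "mult_closed R S" "coprincipal R S"
    using cring.coprincipal_imp_split_cond[OF assms that] .
qed

end
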